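(* Let $S_{r,N}$ be a nontrivial atomic exponential Puiseux semiring with $r>1$. Let $x\in S_{r,N}$ and $k\in\mathbb{N}$ be such that $r^{s_k}$ divides $x$ in $S_{r,N}$. Then for every factorization $z=\sum_{i=0}^{n}c_ir^{s_i}\in\mathsf{Z}(x)$ (with $c_0,\dots,c_n\in\mathbb{N}$), either $r^{s_k}$ divides $\sum_{i=0}^{k}c_ir^{s_i}$ in $S_{r,N}$ or $r^{s_k}$ divides $\sum_{i=k+1}^{n}c_ir^{s_i}$ in $S_{r,N}$.
   Context: $\mathbb{N}=\{0,1,2,\dots\}$. A numerical monoid $N$ is an additive submonoid of $\mathbb{N}$ with finite complement in $\mathbb{N}$; let $s_0<s_1<\cdots$ be its elements. For $r\in\mathbb{Q}_{>0}$ write $r=\mathsf{n}(r)/\mathsf{d}(r)$ in lowest terms. The exponential Puiseux semiring $S_{r,N}$ is the additive submonoid of $\mathbb{Q}_{\ge0}$ generated by $\{r^k:k\in N\}$; nontrivial means $r\notin\mathbb{N}$, and then it is atomic iff $\mathsf{n}(r)>1$, with atoms $r^s$, $s\in N$. In a monoid $M$, $y$ divides $w$ (written $y\mid_M w$) if $w=y+y'$ for some $y'\in M$. $\mathsf{Z}(x)$ denotes the set of factorizations of $x$ into atoms. *)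

theory Defs
  imports Complex_Main "HOL-Library.Infinite_Set"
begin

definition numerical_monoid :: "nat set \<Rightarrow> bool" where
  "numerical_monoid N \<longleftrightarrow> 0 \<in> N \<and> (\<forall>a\<in>N. \<forall>b\<in>N. a + b \<in> N) \<and> finite (UNIV - N)"

text \<open>s_k: the k-th element (in increasing order) of N, starting with s_0.\<close>
definition nm_elem :: "nat set \<Rightarrow> nat \<Rightarrow> nat" where
  "nm_elem N k = enumerate N k"

inductive_set exp_puiseux :: "rat \<Rightarrow> nat set \<Rightarrow> rat set" for r N where
  zero: "0 \<in> exp_puiseux r N"
| gen: "k \<in> N \<Longrightarrow> r ^ k \<in> exp_puiseux r N"
| add: "a \<in> exp_puiseux r N \<Longrightarrow> b \<in> exp_puiseux r N \<Longrightarrow> a + b \<in> exp_puiseux r N"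

definition mdvd :: "rat set \<Rightarrow> rat \<Rightarrow> rat \<Rightarrow> bool" where
  "mdvd M y w \<longleftrightarrow> (\<exists>y'\<in>M. w = y + y')"

definition rat_num :: "rat \<Rightarrow> int" where
  "rat_num r = fst (quotient_of r)"

end

theory Submission
  imports Defs
begin

text \<open>Write \<open>r = p/q\<close> in lowest terms and \<open>t = s\<^sub>k\<close>. Every element of \<open>S\<^sub>r\<^sub>,\<^sub>N\<close> splits into a
  part built from atoms \<open>r\<^sup>s\<close> with \<open>s \<le> t\<close>, which becomes an integer after multiplication by
  \<open>q\<^sup>t\<close>, and a part built from atoms with \<open>s > t\<close>, which lies in \<open>p\<^sup>t\<^sup>+\<^sup>1 \<int>[1/q]\<close>.
  Comparing the two splittings \<open>x = A + B\<close> and \<open>x = r\<^sup>t + L + H\<close>, the difference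
  \<open>B - H = r\<^sup>t + L - A\<close> lies in both groups, whose intersection is \<open>p\<^sup>t\<^sup>+\<^sup>1 q\<^sup>-\<^sup>t \<int> = p r\<^sup>t \<int>\<close>.
  So \<open>B - H = m r\<^sup>t\<close> with \<open>p \<bar> m\<close>: if \<open>m > 0\<close> then \<open>r\<^sup>t\<close> divides \<open>B\<close>, otherwise it divides \<open>A\<close>.\<close>

definition localized_multiples :: "int \<Rightarrow> int \<Rightarrow> rat set" where
  "localized_multiples q a = {u. \<exists>m::int. \<exists>f::nat. u * of_int q ^ f = of_int a * of_int m}"

lemma localized_multiples_zero: "0 \<in> localized_multiples q a"
  unfolding localized_multiples_def by (auto intro: exI[of _ 0])

lemma localized_multiples_diff:
  assumes "u \<in> localized_multiples q a" "v \<in> localized_multiples q a"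
  shows "u - v \<in> localized_multiples q a"
proof -
  obtain m f where m: "u * of_int q ^ f = of_int a * of_int m"
    using assms(1) unfolding localized_multiples_def by blast
  obtain n g where n: "v * of_int q ^ g = of_int a * of_int n"
    using assms(2) unfolding localized_multiples_def by blast
  have "(u - v) * of_int q ^ (f + g) =
      (u * of_int q ^ f) * of_int q ^ g - (v * of_int q ^ g) * of_int q ^ f"
    by (simp add: power_add algebra_simps)
  also have "\<dots> = of_int a * of_int (m * q ^ g - n * q ^ f)"
    unfolding m n by (simp add: algebra_simps)
  finally show ?thesis unfolding localized_multiples_def by blast
qed

lemma localized_multiples_add:
  assumes "u \<in> localized_multiples q a" "v \<in> localized_multiples q a"
  shows "u + v \<in> localized_multiples q a"
  using localized_multiples_diff[OF assms(1) localized_multiples_diff[OF localized_multiples_zero assms(2)]]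
  by simp

lemma localized_multiples_mult_of_int:
  assumes "u \<in> localized_multiples q a"
  shows "u * of_int z \<in> localized_multiples q a"
proof -
  obtain m f where "u * of_int q ^ f = of_int a * of_int m"
    using assms unfolding localized_multiples_def by blast
  then have "u * of_int z * of_int q ^ f = of_int a * of_int (m * z)"
    by (simp add: algebra_simps)
  then show ?thesis unfolding localized_multiples_def by blast
qed

lemma of_int_in_localized_multiples_imp_dvd:
  assumes "coprime a q" "of_int z \<in> localized_multiples q a"
  shows "a dvd z"
proof -
  obtain m f where "of_int z * of_int q ^ f = (of_int a * of_int m :: rat)"
    using assms(2) unfolding localized_multiples_def by blast
  then have "z * q ^ f = a * m"
    by (metis of_int_eq_iff of_int_mult of_int_power)
  moreover have "coprime a (q ^ f)"
    using assms(1) by simp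
  ultimately show ?thesis
    by (metis coprime_dvd_mult_left_iff dvd_triv_left)
qed

lemma quotient_of_pow_mult_denom:
  assumes "quotient_of r = (p, q)"
  shows "r ^ s * of_int q ^ s = of_int p ^ s"
proof -
  have "r * of_int q = of_int p"
    using quotient_of_div[OF assms] quotient_of_denom_pos[OF assms] by simp
  then show ?thesis
    by (metis power_mult_distrib of_int_power)
qed

lemma exp_puiseux_subset:
  assumes "0 \<in> M" "\<And>a b. a \<in> M \<Longrightarrow> b \<in> M \<Longrightarrow> a + b \<in> M" "\<And>s. s \<in> N \<Longrightarrow> r ^ s \<in> M"
  shows "exp_puiseux r N \<subseteq> M"
proof
  show "u \<in> M" if "u \<in> exp_puiseux r N" for u
    using that by induction (use assms in auto)
qed

lemma exp_puiseux_mono: "N \<subseteq> N' \<Longrightarrow> exp_puiseux r N \<subseteq> exp_puiseux r N'"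
  by (rule exp_puiseux_subset) (auto intro: exp_puiseux.intros)

lemma exp_puiseux_of_nat_mult:
  "u \<in> exp_puiseux r N \<Longrightarrow> of_nat c * u \<in> exp_puiseux r N"
  by (induction c) (auto simp: algebra_simps intro: exp_puiseux.intros)

lemma exp_puiseux_sum:
  "finite I \<Longrightarrow> (\<And>i. i \<in> I \<Longrightarrow> f i \<in> exp_puiseux r N) \<Longrightarrow> sum f I \<in> exp_puiseux r N"
  by (induction I rule: finite_induct) (auto intro: exp_puiseux.intros)

lemma exp_puiseux_split:
  assumes "u \<in> exp_puiseux r N"
  obtains L H where "u = L + H" "L \<in> exp_puiseux r (N \<inter> {..t})" "H \<in> exp_puiseux r (N \<inter> {t<..})"
proof -
  have "\<exists>L H. u = L + H \<and> L \<in> exp_puiseux r (N \<inter> {..t}) \<and> H \<in> exp_puiseux r (N \<inter> {t<..})"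
    using assms
  proof induction
    case zero
    show ?case by (intro exI[of _ 0]) (auto intro: exp_puiseux.zero)
  next
    case (gen s)
    show ?case
    proof (cases "s \<le> t")
      case True
      then show ?thesis using gen
        by (intro exI[of _ "r ^ s"] exI[of _ 0]) (auto intro: exp_puiseux.intros)
    next
      case False
      then show ?thesis using gen
        by (intro exI[of _ 0] exI[of _ "r ^ s"]) (auto intro: exp_puiseux.intros)
    qed
  next
    case (add a b)
    then obtain La Ha Lb Hb where
      "a = La + Ha" "La \<in> exp_puiseux r (N \<inter> {..t})" "Ha \<in> exp_puiseux r (N \<inter> {t<..})"
      "b = Lb + Hb" "Lb \<in> exp_puiseux r (N \<inter> {..t})" "Hb \<in> exp_puiseux r (N \<inter> {t<..})"
      by blast
    then show ?case
      by (intro exI[of _ "La + Lb"] exI[of _ "Ha + Hb"]) (auto simp: algebra_simps intro: exp_puiseux.add)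
  qed
  then show ?thesis using that by blast
qed

lemma exp_puiseux_low_mult_denom_pow:
  assumes "quotient_of r = (p, q)" "M \<subseteq> {..t}" "u \<in> exp_puiseux r M"
  shows "u * of_int q ^ t \<in> \<int>"
proof -
  have "r ^ s * of_int q ^ t \<in> \<int>" if "s \<in> M" for s
  proof -
    have "r ^ s * of_int q ^ t = r ^ s * of_int q ^ s * of_int q ^ (t - s)"
      using that assms(2) by (auto simp: mult.assoc power_add[symmetric])
    also have "\<dots> = of_int (p ^ s * q ^ (t - s))"
      using quotient_of_pow_mult_denom[OF assms(1)] by simp
    finally show ?thesis by simp
  qed
  then have "exp_puiseux r M \<subseteq> {u. u * of_int q ^ t \<in> \<int>}"
    by (intro exp_puiseux_subset) (auto simp: distrib_right)
  then show ?thesis using assms(3) by blast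
qed

lemma exp_puiseux_high_in_localized_multiples:
  assumes "quotient_of r = (p, q)" "M \<subseteq> {t<..}" "u \<in> exp_puiseux r M"
  shows "u \<in> localized_multiples q (p ^ (t + 1))"
proof -
  have "r ^ s \<in> localized_multiples q (p ^ (t + 1))" if "s \<in> M" for s
  proof -
    have "s = (t + 1) + (s - t - 1)"
      using that assms(2) by auto
    then have "r ^ s * of_int q ^ s = of_int (p ^ (t + 1)) * of_int (p ^ (s - t - 1))"
      unfolding quotient_of_pow_mult_denom[OF assms(1)] by (metis of_int_mult of_int_power power_add)
    then show ?thesis unfolding localized_multiples_def by blast
  qed
  then have "exp_puiseux r M \<subseteq> localized_multiples q (p ^ (t + 1))"
    by (intro exp_puiseux_subset) (auto intro: localized_multiples_zero localized_multiples_add)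
  then show ?thesis using assms(3) by blast
qed

lemma low_and_high_imp_multiple:
  assumes "quotient_of r = (p, q)"
    and "d * of_int q ^ t \<in> \<int>" "d \<in> localized_multiples q (p ^ (t + 1))"
  obtains \<rho> :: int where "d = of_int (p * \<rho>) * r ^ t"
proof -
  obtain D where D: "d * of_int q ^ t = of_int D"
    using assms(2) Ints_cases by blast
  have "of_int D \<in> localized_multiples q (p ^ (t + 1))"
    using localized_multiples_mult_of_int[OF assms(3), of "q ^ t"] D by simp
  then obtain \<rho> where \<rho>: "D = p ^ (t + 1) * \<rho>"
    using of_int_in_localized_multiples_imp_dvd quotient_of_coprime[OF assms(1)]
    by (metis coprime_power_left_iff dvdE)
  have "d * of_int q ^ t = of_int (p * \<rho>) * (r ^ t * of_int q ^ t)"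
    using D \<rho> quotient_of_pow_mult_denom[OF assms(1), of t] by (simp add: algebra_simps)
  then have "d = of_int (p * \<rho>) * r ^ t"
    using quotient_of_denom_pos[OF assms(1)] by (simp add: algebra_simps)
  then show ?thesis using that by blast
qed

lemma low_high_rebalance:
  assumes "quotient_of r = (p, q)" "r > 0"
    and "A * of_int q ^ t \<in> \<int>" "L * of_int q ^ t \<in> \<int>"
    and "B \<in> localized_multiples q (p ^ (t + 1))" "H \<in> localized_multiples q (p ^ (t + 1))"
    and "r ^ t + L + H = A + B"
  shows "(\<exists>e::nat. A = r ^ t + (L + of_nat e * r ^ t)) \<or> (\<exists>e::nat. B = r ^ t + (H + of_nat e * r ^ t))"
proof -
  have "p > 0"
    using assms(2) quotient_of_div[OF assms(1)] quotient_of_denom_pos[OF assms(1)]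
    by (simp add: zero_less_divide_iff)
  have "(r ^ t + L - A) * of_int q ^ t \<in> \<int>"
    using assms(3,4) quotient_of_pow_mult_denom[OF assms(1), of t]
    by (simp add: left_diff_distrib distrib_right)
  moreover have "r ^ t + L - A = B - H"
    using assms(7) by simp
  moreover have "B - H \<in> localized_multiples q (p ^ (t + 1))"
    using localized_multiples_diff[OF assms(5,6)] .
  ultimately obtain \<rho> where \<rho>: "B - H = of_int (p * \<rho>) * r ^ t"
    using low_and_high_imp_multiple[OF assms(1)] by metis
  show ?thesis
  proof (cases "\<rho> \<ge> 1")
    case True
    then have "p * \<rho> \<ge> 1"
      using \<open>p > 0\<close> mult_mono[of 1 p 1 \<rho>] by simp
    then have "B = r ^ t + (H + of_nat (nat (p * \<rho> - 1)) * r ^ t)"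
      using \<rho> by (simp add: algebra_simps of_nat_diff)
    then show ?thesis by blast
  next
    case False
    then have "- (p * \<rho>) \<ge> 0"
      using \<open>p > 0\<close> by (simp add: mult_nonneg_nonpos)
    then have "A = r ^ t + (L + of_nat (nat (- (p * \<rho>))) * r ^ t)"
      using \<rho> assms(7) by (simp add: algebra_simps)
    then show ?thesis by blast
  qed
qed

lemma numerical_monoid_infinite: "numerical_monoid N \<Longrightarrow> infinite N"
  unfolding numerical_monoid_def by (metis Diff_infinite_finite finite_UNIV infinite_UNIV_nat)

lemma sum_atMost_split_at:
  fixes g :: "nat \<Rightarrow> 'a::comm_monoid_add"
  assumes "\<forall>i>n. g i = 0"
  shows "(\<Sum>i\<le>n. g i) = (\<Sum>i\<le>k. g i) + (\<Sum>i\<in>{k<..n}. g i)"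
proof (cases "k \<le> n")
  case True
  then have "{..n} = {..k} \<union> {k<..n}" by auto
  moreover have "{..k} \<inter> {k<..n} = {}" by auto
  ultimately show ?thesis by (simp add: sum.union_disjoint)
next
  case False
  then have "(\<Sum>i\<le>k. g i) = (\<Sum>i\<le>n. g i)"
    using assms by (intro sum.mono_neutral_right) auto
  then show ?thesis using False by simp
qed

theorem mainTheorem13:
  fixes r :: rat and N :: "nat set" and x :: rat and k n :: nat and c :: "nat \<Rightarrow> nat"
  assumes "numerical_monoid N"
    and "r > 0" and "r \<notin> \<nat>" and "rat_num r > 1"
    and "r > 1"
    and "x \<in> exp_puiseux r N"
    and "mdvd (exp_puiseux r N) (r ^ nm_elem N k) x"
    and "\<forall>i>n. c i = 0"
    and "x = (\<Sum>i\<le>n. of_nat (c i) * r ^ nm_elem N i)"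
  shows "mdvd (exp_puiseux r N) (r ^ nm_elem N k) (\<Sum>i\<le>k. of_nat (c i) * r ^ nm_elem N i)
       \<or> mdvd (exp_puiseux r N) (r ^ nm_elem N k) (\<Sum>i\<in>{k<..n}. of_nat (c i) * r ^ nm_elem N i)"
proof -
  define t where "t = nm_elem N k"
  define A where "A = (\<Sum>i\<le>k. of_nat (c i) * r ^ nm_elem N i)"
  define B where "B = (\<Sum>i\<in>{k<..n}. of_nat (c i) * r ^ nm_elem N i)"
  obtain p q where pq: "quotient_of r = (p, q)"
    by (cases "quotient_of r") auto
  have inf: "infinite N"
    using assms(1) by (rule numerical_monoid_infinite)
  have A_low: "A \<in> exp_puiseux r (N \<inter> {..t})"
    unfolding A_def t_def nm_elem_def using inf
    by (intro exp_puiseux_sum exp_puiseux_of_nat_mult exp_puiseux.gen) (auto intro: enumerate_in_set)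
  have B_high: "B \<in> exp_puiseux r (N \<inter> {t<..})"
    unfolding B_def t_def nm_elem_def using inf
    by (intro exp_puiseux_sum exp_puiseux_of_nat_mult exp_puiseux.gen) (auto intro: enumerate_in_set)
  have "x = A + B"
    unfolding assms(9) A_def B_def by (intro sum_atMost_split_at) (simp add: assms(8))
  moreover obtain y where y: "y \<in> exp_puiseux r N" "x = r ^ t + y"
    using assms(7) unfolding mdvd_def t_def by blast
  moreover obtain L H where LH: "y = L + H"
    "L \<in> exp_puiseux r (N \<inter> {..t})" "H \<in> exp_puiseux r (N \<inter> {t<..})"
    using exp_puiseux_split[OF y(1)] .
  ultimately have "(\<exists>e::nat. A = r ^ t + (L + of_nat e * r ^ t))
      \<or> (\<exists>e::nat. B = r ^ t + (H + of_nat e * r ^ t))"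
    using A_low B_high
    by (intro low_high_rebalance[OF pq assms(2)] exp_puiseux_low_mult_denom_pow[OF pq]
        exp_puiseux_high_in_localized_multiples[OF pq]) (auto simp: add.assoc)
  moreover have "u + of_nat e * r ^ t \<in> exp_puiseux r N"
    if "u \<in> exp_puiseux r (N \<inter> M)" for u M e
    using that exp_puiseux_mono[of "N \<inter> M" N r] inf
    by (auto simp: t_def nm_elem_def intro!: exp_puiseux.intros exp_puiseux_of_nat_mult enumerate_in_set)
  ultimately show ?thesis
    unfolding mdvd_def A_def[symmetric] B_def[symmetric] t_def[symmetric] using LH by blast
qed

end
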